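(* Let $\mu>0$, $s>0$, $\beta\in[0,1]$, and let $f\in\mathcal S^2_\mu(\mathbb R^n):=\bigcup_{L\ge\mu}\mathcal S^2_{\mu,L}(\mathbb R^n)$. Then the $\beta$-High Resolution ODE $$\ddot X(t)+2\sqrt\mu\,\dot X(t)+\beta\sqrt s\,\nabla^2 f(X(t))\dot X(t)+(1+\sqrt{\mu s})\nabla f(X(t))=0,$$ with initial conditions $X(0)=x_0$ and $\dot X(0)=-\frac{2\sqrt s\,\nabla f(x_0)}{1+\sqrt{\mu s}}$ (for arbitrary $x_0\in\mathbb R^n$), has a unique global solution $X\in C^2([0,\infty);\mathbb R^n)$.
   Context: $\mathcal F^1_L(\mathbb R^n)$: differentiable convex $f:\mathbb R^n\to\mathbb R$ with $\|\nabla f(x)-\nabla f(y)\|\le L\|x-y\|$. $\mathcal F^2_L(\mathbb R^n)$: the subclass of $\mathcal F^1_L(\mathbb R^n)$ of twice differentiable $f$ whose Hessian is Lipschitz in Frobenius norm, $\|\nabla^2 f(x)-\nabla^2 f(y)\|_F\le L'\|x-y\|$ for some constant $L'>0$. $\mathcal S^2_{\mu,L}(\mathbb R^n)$: the subclass of $\mathcal F^2_L(\mathbb R^n)$ of $\mu$-strongly convex functions, $f(y)\ge f(x)+\langle\nabla f(x),y-x\rangle+\frac\mu2\|y-x\|^2$, with $0<\mu\le L$. *)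

theory Defs
  imports "HOL-Analysis.Analysis"
begin

text \<open>Function class S^2_{mu,L}(R^n), with the gradient g and Hessian H of f given
  explicitly as functions (they are uniquely determined by f). The Frobenius norm of a
  matrix in real^'n^'n is its norm as an element of the Euclidean space real^'n^'n.\<close>

definition in_S2 :: "real \<Rightarrow> real \<Rightarrow> (real^'n \<Rightarrow> real) \<Rightarrow> (real^'n \<Rightarrow> real^'n)
    \<Rightarrow> (real^'n \<Rightarrow> real^'n^'n) \<Rightarrow> bool" where
  "in_S2 \<mu> L f g H \<longleftrightarrow>
     0 < \<mu> \<and> \<mu> \<le> L \<and>
     (\<forall>x. GDERIV f x :> g x) \<and>
     convex_on UNIV f \<and>
     (\<forall>x y. norm (g x - g y) \<le> L * norm (x - y)) \<and>
     (\<forall>x. (g has_derivative (\<lambda>h. H x *v h)) (at x)) \<and>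
     (\<exists>L'>0. \<forall>x y. norm (H x - H y) \<le> L' * norm (x - y)) \<and>
     (\<forall>x y. f y \<ge> f x + inner (g x) (y - x) + \<mu> / 2 * (norm (y - x))\<^sup>2)"

definition hr_solution :: "real \<Rightarrow> real \<Rightarrow> real \<Rightarrow> (real^'n \<Rightarrow> real^'n)
    \<Rightarrow> (real^'n \<Rightarrow> real^'n^'n) \<Rightarrow> real^'n \<Rightarrow> (real \<Rightarrow> real^'n) \<Rightarrow> bool" where
  "hr_solution \<mu> s \<beta> g H x0 X \<longleftrightarrow>
     (\<exists>X' X''.
        (\<forall>t\<ge>0. (X has_vector_derivative X' t) (at t within {0..})) \<and>
        (\<forall>t\<ge>0. (X' has_vector_derivative X'' t) (at t within {0..})) \<and>
        continuous_on {0..} X'' \<and>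
        (\<forall>t\<ge>0. X'' t + (2 * sqrt \<mu>) *\<^sub>R X' t + (\<beta> * sqrt s) *\<^sub>R (H (X t) *v X' t)
                 + (1 + sqrt (\<mu> * s)) *\<^sub>R g (X t) = 0) \<and>
        X 0 = x0 \<and>
        X' 0 = - ((2 * sqrt s) / (1 + sqrt (\<mu> * s))) *\<^sub>R g x0)"

end

theory Submission
  imports Defs
begin

(* Put V = X' + beta sqrt(s) grad f(X). Since the Hessian term beta sqrt(s) Hess f(X) X' is the time
   derivative of beta sqrt(s) grad f(X), the beta-HR ODE is equivalent to the first-order system
     X' = V - beta sqrt(s) grad f(X),   V' = - 2 sqrt(mu) X' - (1 + sqrt(mu s)) grad f(X),
   whose right-hand side is globally Lipschitz because grad f is. Such a system has a unique
   solution on [0, oo): existence by Banach's fixed point theorem for the Picard operator in a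
   Bielecki-weighted sup norm, uniqueness because e^(-2Kt) |z1 t - z2 t|^2 is non-increasing. *)

lemma has_integral_exp_linear:
  fixes a m :: real
  assumes "a \<noteq> 0" "m \<ge> 0"
  shows "((\<lambda>u. exp (a * u)) has_integral (exp (a * m) - 1) / a) {0..m}"
proof -
  have "((\<lambda>u. exp (a * u)) has_integral exp (a * m) / a - exp (a * 0) / a) {0..m}"
  proof (rule fundamental_theorem_of_calculus)
    fix x assume "x \<in> {0..m}"
    have "((\<lambda>u. exp (a * u) / a) has_real_derivative exp (a * x)) (at x within {0..m})"
      using assms by (auto intro!: derivative_eq_intros)
    then show "((\<lambda>u. exp (a * u) / a) has_vector_derivative exp (a * x)) (at x within {0..m})"
      by (simp add: has_real_derivative_iff_has_vector_derivative)
  qed (use assms in auto)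
  then show ?thesis by (simp add: diff_divide_distrib)
qed

lemma norm_integral_exp_weighted_le:
  fixes h :: "real \<Rightarrow> 'a::banach"
  assumes "K > 0" "m \<ge> 0" "h integrable_on {0..m}"
    and bound: "\<And>u. u \<in> {0..m} \<Longrightarrow> norm (h u) \<le> C * exp (2 * K * u)"
  shows "exp (- (2 * K * m)) * norm (integral {0..m} h) \<le> C / (2 * K)"
proof -
  have "norm (h 0) \<le> C" using bound[of 0] assms(2) by simp
  then have "C \<ge> 0" by (rule order_trans[OF norm_ge_zero])
  have int_exp: "((\<lambda>u. C * exp (2 * K * u)) has_integral C * ((exp (2 * K * m) - 1) / (2 * K))) {0..m}"
    using has_integral_exp_linear[of "2 * K" m] assms(1,2) by (intro has_integral_mult_right) simp
  have "norm (integral {0..m} h) \<le> integral {0..m} (\<lambda>u. C * exp (2 * K * u))"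
    using int_exp assms(3) bound by (intro integral_norm_bound_integral) auto
  also have "\<dots> = C * ((exp (2 * K * m) - 1) / (2 * K))"
    using int_exp by (rule integral_unique)
  finally have "exp (- (2 * K * m)) * norm (integral {0..m} h)
      \<le> exp (- (2 * K * m)) * (C * ((exp (2 * K * m) - 1) / (2 * K)))"
    by (rule mult_left_mono) simp_all
  also have "\<dots> = C * (1 - exp (- (2 * K * m))) / (2 * K)"
    by (simp add: exp_minus field_simps)
  also have "\<dots> \<le> C / (2 * K)"
    using \<open>C \<ge> 0\<close> assms(1) by (intro divide_right_mono) (auto simp: mult_left_le)
  finally show ?thesis .
qed

(* The Picard operator z \<mapsto> z0 + \<integral>\<^sub>0\<^sup>t F (z u) du written in the Bielecki variable
   w t = e^(-2Kt) z t and frozen for t < 0; if F is K-Lipschitz, it halves sup-distances on the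
   whole half-line. *)
definition weighted_picard :: "real \<Rightarrow> ('a::banach \<Rightarrow> 'a) \<Rightarrow> 'a \<Rightarrow> (real \<Rightarrow> 'a) \<Rightarrow> real \<Rightarrow> 'a" where
  "weighted_picard K F z0 w t =
     exp (- (2 * K * max t 0)) *\<^sub>R (z0 + integral {0..max t 0} (\<lambda>u. F (exp (2 * K * u) *\<^sub>R w u)))"

lemma continuous_on_weighted_integrand:
  fixes F :: "'a::real_normed_vector \<Rightarrow> 'b::topological_space"
  assumes "continuous_on UNIV F" "continuous_on UNIV w"
  shows "continuous_on S (\<lambda>u. F (exp (c * u) *\<^sub>R w u))"
proof -
  have "continuous_on UNIV (\<lambda>u. exp (c * u) *\<^sub>R w u)"
    by (intro continuous_intros assms(2))
  then have "continuous_on UNIV (\<lambda>u. F (exp (c * u) *\<^sub>R w u))"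
    by (rule continuous_on_compose2[OF assms(1)]) simp
  then show ?thesis by (rule continuous_on_subset) simp
qed

lemma continuous_on_weighted_picard:
  assumes "continuous_on UNIV F" "continuous_on UNIV w"
  shows "continuous_on UNIV (weighted_picard K F z0 w)"
proof -
  let ?G = "\<lambda>u. F (exp (2 * K * u) *\<^sub>R w u)"
  have "isCont (weighted_picard K F z0 w) t" for t
  proof -
    define T where "T = \<bar>t\<bar> + 1"
    have "continuous_on {0..T} (\<lambda>m. integral {0..m} ?G)"
      using assms by (intro indefinite_integral_continuous_1 integrable_continuous_real
          continuous_on_weighted_integrand)
    then have "continuous_on {-T..T} (\<lambda>t. integral {0..max t 0} ?G)"
      by (rule continuous_on_compose2) (auto intro!: continuous_intros simp: T_def)
    then have "continuous_on {-T..T} (weighted_picard K F z0 w)"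
      unfolding weighted_picard_def by (auto intro!: continuous_intros)
    moreover have "t \<in> interior {-T..T}" by (auto simp: T_def)
    ultimately show ?thesis by (rule continuous_on_interior)
  qed
  then show ?thesis by (simp add: continuous_at_imp_continuous_on)
qed

lemma norm_weighted_picard_le:
  assumes lip: "K-lipschitz_on UNIV F" and "K > 0"
    and "continuous_on UNIV w" and bound: "\<And>u. norm (w u) \<le> B"
  shows "norm (weighted_picard K F z0 w t) \<le> norm z0 + (norm (F 0) + K * B) / (2 * K)"
proof -
  define m where "m = max t 0"
  let ?G = "\<lambda>u. F (exp (2 * K * u) *\<^sub>R w u)"
  have "?G integrable_on {0..m}"
    using lipschitz_on_continuous_on[OF lip] assms(3)
    by (intro integrable_continuous_real continuous_on_weighted_integrand)
  moreover have "norm (?G u) \<le> (norm (F 0) + K * B) * exp (2 * K * u)" if "u \<in> {0..m}" for u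
  proof -
    have "norm (?G u) \<le> norm (F 0) + K * norm (exp (2 * K * u) *\<^sub>R w u)"
      using lipschitz_on_normD[OF lip, of "exp (2 * K * u) *\<^sub>R w u" 0]
        norm_triangle_ineq2[of "?G u" "F 0"] by simp
    also have "\<dots> \<le> norm (F 0) * exp (2 * K * u) + K * (exp (2 * K * u) * B)"
    proof (rule add_mono)
      show "norm (F 0) \<le> norm (F 0) * exp (2 * K * u)"
        using that \<open>K > 0\<close> by (intro mult_le_cancel_left1[THEN iffD2]) auto
      show "K * norm (exp (2 * K * u) *\<^sub>R w u) \<le> K * (exp (2 * K * u) * B)"
        using \<open>K > 0\<close> bound[of u] by (intro mult_left_mono) auto
    qed
    finally show ?thesis by (simp add: algebra_simps)
  qed
  ultimately have "exp (- (2 * K * m)) * norm (integral {0..m} ?G) \<le> (norm (F 0) + K * B) / (2 * K)"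
    using \<open>K > 0\<close> by (intro norm_integral_exp_weighted_le) (auto simp: m_def)
  moreover have "exp (- (2 * K * m)) * norm z0 \<le> norm z0"
    using \<open>K > 0\<close> by (intro mult_left_le_one_le) (auto simp: m_def)
  moreover have "norm (weighted_picard K F z0 w t)
      \<le> exp (- (2 * K * m)) * norm z0 + exp (- (2 * K * m)) * norm (integral {0..m} ?G)"
    unfolding weighted_picard_def m_def[symmetric]
    using mult_left_mono[OF norm_triangle_ineq[of z0 "integral {0..m} ?G"], of "exp (- (2 * K * m))"]
    by (simp add: distrib_left)
  ultimately show ?thesis by linarith
qed

lemma norm_weighted_picard_diff_le:
  assumes lip: "K-lipschitz_on UNIV F" and "K > 0"
    and "continuous_on UNIV v" "continuous_on UNIV w" and bound: "\<And>u. norm (v u - w u) \<le> D"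
  shows "norm (weighted_picard K F z0 v t - weighted_picard K F z0 w t) \<le> D / 2"
proof -
  define m where "m = max t 0"
  let ?G = "\<lambda>w u. F (exp (2 * K * u) *\<^sub>R w u)"
  have "?G v integrable_on {0..m}" "?G w integrable_on {0..m}"
    using lipschitz_on_continuous_on[OF lip] assms(3,4)
    by (auto intro!: integrable_continuous_real continuous_on_weighted_integrand)
  then have int: "(\<lambda>u. ?G v u - ?G w u) integrable_on {0..m}"
    "integral {0..m} (?G v) - integral {0..m} (?G w) = integral {0..m} (\<lambda>u. ?G v u - ?G w u)"
    by (auto intro: integrable_diff integral_diff[symmetric])
  have "norm (?G v u - ?G w u) \<le> (K * D) * exp (2 * K * u)" for u
  proof -
    have "norm (?G v u - ?G w u) \<le> K * norm (exp (2 * K * u) *\<^sub>R (v u - w u))"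
      using lipschitz_on_normD[OF lip] by (simp add: scaleR_diff_right)
    also have "\<dots> \<le> K * (exp (2 * K * u) * D)"
      using \<open>K > 0\<close> bound[of u] by (intro mult_left_mono) auto
    finally show ?thesis by (simp add: algebra_simps)
  qed
  then have "exp (- (2 * K * m)) * norm (integral {0..m} (\<lambda>u. ?G v u - ?G w u)) \<le> (K * D) / (2 * K)"
    using \<open>K > 0\<close> int by (intro norm_integral_exp_weighted_le) (auto simp: m_def)
  then show ?thesis
    using \<open>K > 0\<close> int
    by (simp add: weighted_picard_def m_def[symmetric] scaleR_diff_right[symmetric])
qed

lemma lipschitz_integral_equation_solvable:
  fixes F :: "'a::banach \<Rightarrow> 'a"
  assumes lip: "K-lipschitz_on UNIV F" and "K > 0"
  shows "\<exists>z :: real \<Rightarrow> 'a. continuous_on UNIV z \<and> (\<forall>t\<ge>0. z t = z0 + integral {0..t} (\<lambda>u. F (z u)))"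
proof -
  let ?P = "weighted_picard K F z0"
  have P_bcontfun: "?P (apply_bcontfun b) \<in> bcontfun" for b :: "real \<Rightarrow>\<^sub>C 'a"
  proof (rule bcontfun_normI)
    show "continuous_on UNIV (?P b)"
      using lipschitz_on_continuous_on[OF lip] by (rule continuous_on_weighted_picard) simp
    show "norm (?P b t) \<le> norm z0 + (norm (F 0) + K * norm b) / (2 * K)" for t
      by (rule norm_weighted_picard_le[OF lip \<open>K > 0\<close>]) (auto intro: norm_bounded)
  qed
  define \<Phi> where "\<Phi> b = Bcontfun (?P (apply_bcontfun b))" for b
  have \<Phi>: "apply_bcontfun (\<Phi> b) = ?P (apply_bcontfun b)" for b
    unfolding \<Phi>_def using P_bcontfun by (simp add: Bcontfun_inverse)
  have "\<exists>!b. \<Phi> b = b"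
  proof (rule banach_fix_type[of "1/2"])
    show "\<forall>v w. dist (\<Phi> v) (\<Phi> w) \<le> 1 / 2 * dist v w"
    proof (intro allI dist_bound)
      fix v w :: "real \<Rightarrow>\<^sub>C 'a" and t
      have "norm (apply_bcontfun v u - apply_bcontfun w u) \<le> norm (v - w)" for u
        using norm_bounded[of "v - w" u] by simp
      then have "norm (?P v t - ?P w t) \<le> norm (v - w) / 2"
        by (rule norm_weighted_picard_diff_le[OF lip \<open>K > 0\<close> continuous_on_apply_bcontfun
            continuous_on_apply_bcontfun])
      then show "dist (apply_bcontfun (\<Phi> v) t) (apply_bcontfun (\<Phi> w) t) \<le> 1 / 2 * dist v w"
        unfolding dist_norm \<Phi> by simp
    qed
  qed simp_all
  then obtain b where "\<Phi> b = b" by blast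
  then have b: "apply_bcontfun b t = ?P (apply_bcontfun b) t" for t
    using \<Phi> by metis
  define z where "z t = exp (2 * K * t) *\<^sub>R apply_bcontfun b t" for t
  have "z t = z0 + integral {0..t} (\<lambda>u. F (z u))" if "t \<ge> 0" for t
  proof -
    have "z t = exp (2 * K * t) *\<^sub>R ?P (apply_bcontfun b) t"
      unfolding z_def by (subst b) (rule refl)
    also have "\<dots> = z0 + integral {0..t} (\<lambda>u. F (z u))"
      using that by (simp add: weighted_picard_def z_def flip: exp_add)
    finally show ?thesis .
  qed
  moreover have "continuous_on UNIV z"
    unfolding z_def by (auto intro!: continuous_intros)
  ultimately show ?thesis by auto
qed

lemma integral_equation_imp_has_vector_derivative:
  fixes f :: "real \<Rightarrow> 'a::banach"
  assumes "continuous_on {0..} f" and z: "\<And>t. t \<ge> 0 \<Longrightarrow> z t = z0 + integral {0..t} f"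
    and "t \<ge> 0"
  shows "(z has_vector_derivative f t) (at t within {0..})"
proof -
  have "((\<lambda>u. integral {0..u} f) has_vector_derivative f t) (at t within {0..t+1})"
    using assms by (intro integral_has_vector_derivative) (auto intro: continuous_on_subset)
  moreover have "at t within {0..t+1} = at t within {0..}"
    by (rule at_within_nhd[where S="{..<t+1}"]) auto
  ultimately have "((\<lambda>u. z0 + integral {0..u} f) has_vector_derivative f t) (at t within {0..})"
    by (auto intro!: derivative_eq_intros)
  then show ?thesis
    by (rule has_vector_derivative_transform_within[where d=1]) (use assms in auto)
qed

definition forward_solution :: "('a::real_normed_vector \<Rightarrow> 'a) \<Rightarrow> 'a \<Rightarrow> (real \<Rightarrow> 'a) \<Rightarrow> bool" where
  "forward_solution F z0 z \<longleftrightarrow>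
     z 0 = z0 \<and> (\<forall>t\<ge>0. (z has_vector_derivative F (z t)) (at t within {0..}))"

lemma lipschitz_forward_solution_exists:
  fixes F :: "'a::banach \<Rightarrow> 'a"
  assumes lip: "K-lipschitz_on UNIV F"
  shows "\<exists>z. forward_solution F z0 z"
proof -
  have "(K + 1)-lipschitz_on UNIV F" by (rule lipschitz_on_le[OF lip]) simp
  moreover have "K + 1 > 0" using lipschitz_on_nonneg[OF lip] by simp
  ultimately obtain z :: "real \<Rightarrow> 'a" where zc: "continuous_on UNIV z"
    and z: "\<And>t. t \<ge> 0 \<Longrightarrow> z t = z0 + integral {0..t} (\<lambda>u. F (z u))"
    using lipschitz_integral_equation_solvable by blast
  have "continuous_on UNIV (\<lambda>u. F (z u))"
    using continuous_on_compose2[OF lipschitz_on_continuous_on[OF lip] zc] by simp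
  then have "continuous_on {0..} (\<lambda>u. F (z u))"
    by (rule continuous_on_subset) simp
  then have "(z has_vector_derivative F (z t)) (at t within {0..})" if "t \<ge> 0" for t
    using z that by (rule integral_equation_imp_has_vector_derivative)
  moreover have "z 0 = z0" using z[of 0] by simp
  ultimately show ?thesis unfolding forward_solution_def by blast
qed

lemma lipschitz_forward_solution_unique:
  fixes F :: "'a::real_inner \<Rightarrow> 'a"
  assumes lip: "K-lipschitz_on UNIV F"
    and "forward_solution F z0 z1" "forward_solution F z0 z2" "T \<ge> 0"
  shows "z1 T = z2 T"
proof -
  define d where "d t = z1 t - z2 t" for t
  define e where "e t = F (z1 t) - F (z2 t)" for t
  define \<phi> where "\<phi> t = exp (- (2 * K * t)) * (d t \<bullet> d t)" for t
  define \<phi>' where "\<phi>' t = exp (- (2 * K * t)) * (2 * (d t \<bullet> e t) - 2 * K * (d t \<bullet> d t))" for t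
  have \<phi>_deriv: "(\<phi> has_real_derivative \<phi>' t) (at t within {0..})" if "t \<ge> 0" for t
  proof -
    have "(d has_derivative (\<lambda>h. h *\<^sub>R e t)) (at t within {0..})"
      using assms(2,3) that has_vector_derivative_diff[of z1 _ _ z2]
      unfolding forward_solution_def d_def e_def has_vector_derivative_def
      by (simp add: fun_diff_def scaleR_diff_right)
    from has_derivative_inner[OF this this]
    have "((\<lambda>t. d t \<bullet> d t) has_real_derivative 2 * (d t \<bullet> e t)) (at t within {0..})"
      unfolding has_field_derivative_def
      by (rule has_derivative_eq_rhs) (auto simp: inner_commute algebra_simps fun_eq_iff)
    then show ?thesis
      unfolding \<phi>_def \<phi>'_def by (auto intro!: derivative_eq_intros simp: algebra_simps)
  qed
  have \<phi>'_nonpos: "\<phi>' t \<le> 0" for t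
  proof -
    have "d t \<bullet> e t \<le> norm (d t) * norm (e t)" by (rule norm_cauchy_schwarz)
    also have "\<dots> \<le> norm (d t) * (K * norm (d t))"
      unfolding e_def d_def by (intro mult_left_mono lipschitz_on_normD[OF lip]) auto
    finally have "d t \<bullet> e t \<le> K * (d t \<bullet> d t)"
      by (simp add: power2_norm_eq_inner[symmetric] power2_eq_square algebra_simps)
    then show ?thesis unfolding \<phi>'_def by (simp add: mult_le_0_iff)
  qed
  have "\<phi> T \<le> \<phi> 0"
  proof (rule DERIV_nonpos_imp_decreasing_open[OF \<open>T \<ge> 0\<close>])
    fix t :: real assume t: "0 < t" "t < T"
    have "at t within {0..} = at t" by (rule at_within_interior) (use t in auto)
    then show "\<exists>y. (\<phi> has_real_derivative y) (at t) \<and> y \<le> 0"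
      using \<phi>_deriv[of t] t \<phi>'_nonpos by auto
  next
    show "continuous_on {0..T} \<phi>"
      using \<phi>_deriv DERIV_continuous
      by (force simp: continuous_on_eq_continuous_within intro: continuous_within_subset)
  qed
  moreover have "\<phi> 0 = 0" using assms(2,3) by (simp add: \<phi>_def d_def forward_solution_def)
  ultimately have "d T \<bullet> d T \<le> 0" unfolding \<phi>_def by (simp add: mult_le_0_iff)
  then show ?thesis unfolding d_def by (metis inner_gt_zero_iff not_le eq_iff_diff_eq_0)
qed

definition hr_phase_field :: "real \<Rightarrow> real \<Rightarrow> real \<Rightarrow> ('a::real_vector \<Rightarrow> 'a) \<Rightarrow> 'a \<times> 'a \<Rightarrow> 'a \<times> 'a" where
  "hr_phase_field \<mu> s \<beta> g z =
     (snd z - (\<beta> * sqrt s) *\<^sub>R g (fst z),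
      - (2 * sqrt \<mu>) *\<^sub>R (snd z - (\<beta> * sqrt s) *\<^sub>R g (fst z)) - (1 + sqrt (\<mu> * s)) *\<^sub>R g (fst z))"

definition hr_phase_init :: "real \<Rightarrow> real \<Rightarrow> real \<Rightarrow> ('a::real_vector \<Rightarrow> 'a) \<Rightarrow> 'a \<Rightarrow> 'a \<times> 'a" where
  "hr_phase_init \<mu> s \<beta> g x0 = (x0, (\<beta> * sqrt s - 2 * sqrt s / (1 + sqrt (\<mu> * s))) *\<^sub>R g x0)"

lemma lipschitz_hr_phase_field:
  fixes g :: "'a::real_normed_vector \<Rightarrow> 'a"
  assumes "L-lipschitz_on UNIV g"
  shows "\<exists>K. K-lipschitz_on UNIV (hr_phase_field \<mu> s \<beta> g)"
proof -
  have fst: "1-lipschitz_on UNIV (fst :: 'a \<times> 'a \<Rightarrow> 'a)"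
    and snd: "1-lipschitz_on UNIV (snd :: 'a \<times> 'a \<Rightarrow> 'a)"
    by (rule lipschitz_onI, simp_all add: dist_fst_le dist_snd_le)+
  have gx: "(L * 1)-lipschitz_on UNIV (\<lambda>z :: 'a \<times> 'a. g (fst z))"
    by (rule lipschitz_on_compose2[OF fst lipschitz_on_subset[OF assms]]) simp
  have v: "(1 + \<bar>\<beta> * sqrt s\<bar> * (L * 1))-lipschitz_on UNIV (\<lambda>z. snd z - (\<beta> * sqrt s) *\<^sub>R g (fst z))"
    by (intro lipschitz_on_diff lipschitz_on_cmult snd gx)
  show ?thesis
    unfolding hr_phase_field_def
    by (rule exI, rule lipschitz_on_Pair[OF v lipschitz_on_diff[OF lipschitz_on_cmult[OF v]
          lipschitz_on_cmult[OF gx]]])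
qed

lemma has_vector_derivative_compose_matrix:
  fixes g :: "real^'n \<Rightarrow> real^'m" and J :: "real^'n \<Rightarrow> real^'n^'m"
  assumes "(X has_vector_derivative v) (at t within S)"
    and "(g has_derivative (\<lambda>h. J (X t) *v h)) (at (X t))"
  shows "((\<lambda>t. g (X t)) has_vector_derivative J (X t) *v v) (at t within S)"
  using vector_derivative_diff_chain_within[OF assms(1) has_derivative_at_withinI[OF assms(2)]]
  by (simp add: o_def)

lemma continuous_on_matrix_vector_mult:
  fixes A :: "'a::topological_space \<Rightarrow> real^'n^'m" and v :: "'a \<Rightarrow> real^'n"
  assumes "continuous_on S A" "continuous_on S v"
  shows "continuous_on S (\<lambda>t. A t *v v t)"
  unfolding matrix_vector_mult_def
  by (intro continuous_intros continuous_on_vec_lambda continuous_on_component assms)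

lemma hr_solution_imp_forward_solution:
  assumes "hr_solution \<mu> s \<beta> g H x0 X"
    and gH: "\<And>x. (g has_derivative (\<lambda>h. H x *v h)) (at x)"
  shows "\<exists>z. forward_solution (hr_phase_field \<mu> s \<beta> g) (hr_phase_init \<mu> s \<beta> g x0) z \<and>
             (\<forall>t. X t = fst (z t))"
proof -
  obtain X' X'' where dX: "\<And>t. t \<ge> 0 \<Longrightarrow> (X has_vector_derivative X' t) (at t within {0..})"
    and dX': "\<And>t. t \<ge> 0 \<Longrightarrow> (X' has_vector_derivative X'' t) (at t within {0..})"
    and ode: "\<And>t. t \<ge> 0 \<Longrightarrow> X'' t + (2 * sqrt \<mu>) *\<^sub>R X' t + (\<beta> * sqrt s) *\<^sub>R (H (X t) *v X' t)
                 + (1 + sqrt (\<mu> * s)) *\<^sub>R g (X t) = 0"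
    and "X 0 = x0" "X' 0 = - ((2 * sqrt s) / (1 + sqrt (\<mu> * s))) *\<^sub>R g x0"
    using assms(1) unfolding hr_solution_def by blast
  define z where "z t = (X t, X' t + (\<beta> * sqrt s) *\<^sub>R g (X t))" for t
  have "z 0 = hr_phase_init \<mu> s \<beta> g x0"
    using \<open>X 0 = x0\<close> \<open>X' 0 = _\<close> by (simp add: z_def hr_phase_init_def algebra_simps)
  moreover have "(z has_vector_derivative hr_phase_field \<mu> s \<beta> g (z t)) (at t within {0..})"
    if "t \<ge> 0" for t
  proof -
    have "(z has_vector_derivative (X' t, X'' t + (\<beta> * sqrt s) *\<^sub>R (H (X t) *v X' t))) (at t within {0..})"
      unfolding z_def
      by (intro has_vector_derivative_Pair has_vector_derivative_add dX dX' that
          bounded_linear.has_vector_derivative[OF bounded_linear_scaleR_right]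
          has_vector_derivative_compose_matrix gH)
    moreover have "X'' t + (\<beta> * sqrt s) *\<^sub>R (H (X t) *v X' t)
        = - (2 * sqrt \<mu>) *\<^sub>R X' t - (1 + sqrt (\<mu> * s)) *\<^sub>R g (X t)"
      using ode[OF that] by (simp add: algebra_simps eq_neg_iff_add_eq_0)
    ultimately show ?thesis by (simp add: hr_phase_field_def z_def)
  qed
  ultimately show ?thesis
    unfolding forward_solution_def by (intro exI[of _ z]) (simp add: z_def)
qed

lemma forward_solution_imp_hr_solution:
  assumes gH: "\<And>x. (g has_derivative (\<lambda>h. H x *v h)) (at x)" and "continuous_on UNIV H"
    and "forward_solution (hr_phase_field \<mu> s \<beta> g) (hr_phase_init \<mu> s \<beta> g x0) z"
  shows "hr_solution \<mu> s \<beta> g H x0 (\<lambda>t. fst (z t))"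
proof -
  have z0: "z 0 = hr_phase_init \<mu> s \<beta> g x0"
    and z: "\<And>t. t \<ge> 0 \<Longrightarrow> (z has_vector_derivative hr_phase_field \<mu> s \<beta> g (z t)) (at t within {0..})"
    using assms(3) unfolding forward_solution_def by auto
  define X where "X t = fst (z t)" for t
  define X' where "X' t = snd (z t) - (\<beta> * sqrt s) *\<^sub>R g (X t)" for t
  define X'' where "X'' t = - (2 * sqrt \<mu>) *\<^sub>R X' t - (1 + sqrt (\<mu> * s)) *\<^sub>R g (X t)
      - (\<beta> * sqrt s) *\<^sub>R (H (X t) *v X' t)" for t
  have dX: "(X has_vector_derivative X' t) (at t within {0..})" if "t \<ge> 0" for t
    using bounded_linear.has_vector_derivative[OF bounded_linear_fst z[OF that]]
    by (simp add: hr_phase_field_def X_def[abs_def] X'_def)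
  have dX': "(X' has_vector_derivative X'' t) (at t within {0..})" if "t \<ge> 0" for t
  proof -
    have "((\<lambda>t. snd (z t) - (\<beta> * sqrt s) *\<^sub>R g (X t)) has_vector_derivative
        snd (hr_phase_field \<mu> s \<beta> g (z t)) - (\<beta> * sqrt s) *\<^sub>R (H (X t) *v X' t)) (at t within {0..})"
      by (intro has_vector_derivative_diff bounded_linear.has_vector_derivative[OF bounded_linear_snd]
          bounded_linear.has_vector_derivative[OF bounded_linear_scaleR_right]
          has_vector_derivative_compose_matrix dX z gH that)
    then show ?thesis
      unfolding X'_def[abs_def] X''_def by (simp add: hr_phase_field_def X_def)
  qed
  have g: "continuous_on UNIV g"
    using gH by (blast intro: continuous_at_imp_continuous_on has_derivative_continuous)
  have "continuous_on {0..} z"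
    using z by (rule continuous_on_vector_derivative) simp
  then have "continuous_on {0..} X" "continuous_on {0..} (\<lambda>t. g (X t))" "continuous_on {0..} (\<lambda>t. H (X t))"
    unfolding X_def
    by (auto intro!: continuous_intros continuous_on_compose2[OF g] continuous_on_compose2[OF assms(2)])
  then have "continuous_on {0..} X''"
    unfolding X''_def X'_def
    by (intro continuous_intros continuous_on_matrix_vector_mult \<open>continuous_on {0..} z\<close>)
  moreover have "X'' t + (2 * sqrt \<mu>) *\<^sub>R X' t + (\<beta> * sqrt s) *\<^sub>R (H (X t) *v X' t)
      + (1 + sqrt (\<mu> * s)) *\<^sub>R g (X t) = 0" for t
    by (simp add: X''_def)
  moreover have "X 0 = x0" "X' 0 = - ((2 * sqrt s) / (1 + sqrt (\<mu> * s))) *\<^sub>R g x0"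
    using z0 by (simp_all add: hr_phase_init_def X_def X'_def algebra_simps)
  ultimately show ?thesis
    unfolding hr_solution_def X_def[symmetric] using dX dX' by blast
qed

lemma in_S2_regularity:
  assumes "in_S2 \<mu> L f g H"
  shows "\<And>x. (g has_derivative (\<lambda>h. H x *v h)) (at x)"
    and "L-lipschitz_on UNIV g" and "continuous_on UNIV H"
proof -
  obtain L' where "L' > 0" and H_lip: "\<And>x y. norm (H x - H y) \<le> L' * norm (x - y)"
    using assms unfolding in_S2_def by blast
  then have "L'-lipschitz_on UNIV H"
    by (intro lipschitz_onI) (auto simp: dist_norm)
  then show "continuous_on UNIV H"
    by (rule lipschitz_on_continuous_on)
  show "L-lipschitz_on UNIV g"
    using assms unfolding in_S2_def by (intro lipschitz_onI) (auto simp: dist_norm)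
  show "(g has_derivative (\<lambda>h. H x *v h)) (at x)" for x
    using assms unfolding in_S2_def by blast
qed

theorem theorem3p2:
  fixes \<mu> s \<beta> L :: real
    and f :: "real^'n \<Rightarrow> real" and g :: "real^'n \<Rightarrow> real^'n" and H :: "real^'n \<Rightarrow> real^'n^'n"
    and x0 :: "real^'n"
  assumes "\<mu> > 0" and "s > 0" and "0 \<le> \<beta>" and "\<beta> \<le> 1"
    and "L \<ge> \<mu>" and "in_S2 \<mu> L f g H"
  shows "(\<exists>X. hr_solution \<mu> s \<beta> g H x0 X) \<and>
         (\<forall>X Y. hr_solution \<mu> s \<beta> g H x0 X \<longrightarrow> hr_solution \<mu> s \<beta> g H x0 Y
                 \<longrightarrow> (\<forall>t\<ge>0. X t = Y t))"
proof -
  note gH = in_S2_regularity(1)[OF \<open>in_S2 \<mu> L f g H\<close>]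
    and H = in_S2_regularity(3)[OF \<open>in_S2 \<mu> L f g H\<close>]
  obtain K where lip: "K-lipschitz_on UNIV (hr_phase_field \<mu> s \<beta> g)"
    using lipschitz_hr_phase_field[OF in_S2_regularity(2)[OF \<open>in_S2 \<mu> L f g H\<close>]] by blast
  show ?thesis
  proof (intro conjI allI impI)
    obtain z where "forward_solution (hr_phase_field \<mu> s \<beta> g) (hr_phase_init \<mu> s \<beta> g x0) z"
      using lipschitz_forward_solution_exists[OF lip] by blast
    then have "hr_solution \<mu> s \<beta> g H x0 (\<lambda>t. fst (z t))"
      by (rule forward_solution_imp_hr_solution[OF gH H])
    then show "\<exists>X. hr_solution \<mu> s \<beta> g H x0 X" by blast
  next
    fix X Y and t :: real
    assume X: "hr_solution \<mu> s \<beta> g H x0 X" and Y: "hr_solution \<mu> s \<beta> g H x0 Y" and "t \<ge> 0"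
    obtain zX zY where
      zX: "forward_solution (hr_phase_field \<mu> s \<beta> g) (hr_phase_init \<mu> s \<beta> g x0) zX" "\<forall>t. X t = fst (zX t)"
      and zY: "forward_solution (hr_phase_field \<mu> s \<beta> g) (hr_phase_init \<mu> s \<beta> g x0) zY" "\<forall>t. Y t = fst (zY t)"
      using hr_solution_imp_forward_solution[OF X gH] hr_solution_imp_forward_solution[OF Y gH] by blast
    have "zX t = zY t"
      by (rule lipschitz_forward_solution_unique[OF lip zX(1) zY(1) \<open>t \<ge> 0\<close>])
    then show "X t = Y t" using zX(2) zY(2) by simp
  qed
qed

end
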